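(* Let $D$ and $H$ be finite sets of doctors and hospitals with $|D|\ge 2$ and $|H|\ge 2$. An interview arrangement $(\iota,\kappa)$ is globally adequate (i.e., adequate at every preference profile $P$) if and only if either (1) $\kappa_d=1$ for every $d\in D$ and $\iota_h=1$ for every $h\in H$, or (2) $\kappa_d\ge\min\{|D|,|H|\}$ for every $d\in D$ and $\iota_h\ge\min\{|D|,|H|\}$ for every $h\in H$.
   Context: Each $h\in H$ has a strict preference $P_h$ over $D\cup\{h\}$ and each $d\in D$ a strict preference $P_d$ over $H\cup\{d\}$ (ranking below oneself means unacceptable); a profile $P$ collects these, and $\mathcal P$ is the set of all profiles. A matching is $\mu:H\cup D\to H\cup D$ with $\mu(h)\in D\cup\{h\}$, $\mu(d)\in H\cup\{d\}$, and $\mu(d)=h$ iff $\mu(h)=d$; it is stable if there is no pair $(d,h)$ with $h\mathrel{P_d}\mu(d)$ and $d\mathrel{P_h}\mu(h)$. An interview arrangement is $(\iota,\kappa)$ with $\iota_h\in\mathbb N$ the interview capacity of each $h\in H$ and $\kappa_d\in\mathbb N$ that of each $d\in D$. An interview matching is a many-to-many matching $\nu$ ($\nu(d)\subseteq H$, $\nu(h)\subseteq D$, $h\in\nu(d)$ iff $d\in\nu(h)$) with $|\nu(d)|\le\kappa_d$, $|\nu(h)|\le\iota_h$. The $(\iota,\kappa)$-matching at $P$ is obtained in two steps. Step 1: $\nu$ is the hospital-optimal pairwise stable interview matching, computed by hospital-proposing deferred acceptance in which each agent's choice from a set of proposals is its acceptable partners in that set if at most its capacity many, otherwise its capacity-many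 best according to its preference. Step 2: the final matching is the outcome of doctor-proposing deferred acceptance with each agent's preference restricted to $\nu$ (agent $i$ ranks only agents in $\nu(i)$, in the order of $P_i$ and only if acceptable; all others unacceptable). $(\iota,\kappa)$ is adequate at $P$ if the $(\iota,\kappa)$-matching at $P$ is stable with respect to $P$, and globally adequate if adequate at every $P\in\mathcal P$. *)

theory Defs
  imports Main
begin

text \<open>A strict preference of an agent over the other side plus itself is represented by the
list of its acceptable partners, best first (agents ranked below oneself are exactly those
not in the list; their mutual order is irrelevant).\<close>

definition valid_pref :: "'b set \<Rightarrow> 'b list \<Rightarrow> bool" where
  "valid_pref B l \<longleftrightarrow> distinct l \<and> set l \<subseteq> B"

definition prefers :: "'b list \<Rightarrow> 'b \<Rightarrow> 'b \<Rightarrow> bool" where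
  "prefers l x y \<longleftrightarrow> x \<in> set l \<and> (y \<notin> set l \<or> (\<exists>i j. i < j \<and> j < length l \<and> l ! i = x \<and> l ! j = y))"

text \<open>R is the set of pairs (a,b) where b has already rejected a.\<close>

definition da_proposals ::
  "'a set \<Rightarrow> ('a \<Rightarrow> 'b list) \<Rightarrow> ('a \<Rightarrow> nat) \<Rightarrow> ('a \<times> 'b) set \<Rightarrow> ('a \<times> 'b) set" where
  "da_proposals A pa qa R =
     {(a, b). a \<in> A \<and> b \<in> set (take (qa a) (filter (\<lambda>b'. (a, b') \<notin> R) (pa a)))}"

definition da_held ::
  "('b \<Rightarrow> 'a list) \<Rightarrow> ('b \<Rightarrow> nat) \<Rightarrow> ('a \<times> 'b) set \<Rightarrow> ('a \<times> 'b) set" where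
  "da_held pb qb Pr =
     {(a, b). (a, b) \<in> Pr \<and> a \<in> set (take (qb b) (filter (\<lambda>a'. (a', b) \<in> Pr) (pb b)))}"

definition da_step ::
  "'a set \<Rightarrow> ('a \<Rightarrow> 'b list) \<Rightarrow> ('b \<Rightarrow> 'a list) \<Rightarrow> ('a \<Rightarrow> nat) \<Rightarrow> ('b \<Rightarrow> nat)
    \<Rightarrow> ('a \<times> 'b) set \<Rightarrow> ('a \<times> 'b) set" where
  "da_step A pa pb qa qb R =
     (let Pr = da_proposals A pa qa R in R \<union> (Pr - da_held pb qb Pr))"

text \<open>Every round that does not terminate adds a new rejected pair from the finite set
of (proposer, listed receiver) pairs, so after that many rounds a fixed point is reached.\<close>
definition da_rounds :: "'a set \<Rightarrow> ('a \<Rightarrow> 'b list) \<Rightarrow> nat" where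
  "da_rounds A pa = (\<Sum>a\<in>A. length (pa a))"

definition da ::
  "'a set \<Rightarrow> ('a \<Rightarrow> 'b list) \<Rightarrow> ('b \<Rightarrow> 'a list) \<Rightarrow> ('a \<Rightarrow> nat) \<Rightarrow> ('b \<Rightarrow> nat)
    \<Rightarrow> ('a \<times> 'b) set" where
  "da A pa pb qa qb =
     (let R = (da_step A pa pb qa qb ^^ da_rounds A pa) {}
      in da_held pb qb (da_proposals A pa qa R))"

definition interview_matching ::
  "'h set \<Rightarrow> ('h \<Rightarrow> nat) \<Rightarrow> ('d \<Rightarrow> nat) \<Rightarrow> ('h \<Rightarrow> 'd list) \<Rightarrow> ('d \<Rightarrow> 'h list)
    \<Rightarrow> ('h \<times> 'd) set" where
  "interview_matching H iota kappa Ph Pd = da H Ph Pd iota kappa"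

definition final_matching ::
  "'d set \<Rightarrow> 'h set \<Rightarrow> ('h \<Rightarrow> nat) \<Rightarrow> ('d \<Rightarrow> nat) \<Rightarrow> ('h \<Rightarrow> 'd list) \<Rightarrow> ('d \<Rightarrow> 'h list)
    \<Rightarrow> ('d \<times> 'h) set" where
  "final_matching D H iota kappa Ph Pd =
     (let \<nu> = interview_matching H iota kappa Ph Pd
      in da D (\<lambda>d. filter (\<lambda>h. (h, d) \<in> \<nu>) (Pd d))
              (\<lambda>h. filter (\<lambda>d. (h, d) \<in> \<nu>) (Ph h))
              (\<lambda>_. 1) (\<lambda>_. 1))"

text \<open>h P_d mu(d): h acceptable to d and better than every current partner of d
(if d is unmatched, mu(d) = d and this just says h is acceptable).\<close>
definition stable ::
  "'d set \<Rightarrow> 'h set \<Rightarrow> ('h \<Rightarrow> 'd list) \<Rightarrow> ('d \<Rightarrow> 'h list) \<Rightarrow> ('d \<times> 'h) set \<Rightarrow> bool" where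
  "stable D H Ph Pd M \<longleftrightarrow>
     \<not> (\<exists>d\<in>D. \<exists>h\<in>H.
          h \<in> set (Pd d) \<and> (\<forall>h'. (d, h') \<in> M \<longrightarrow> prefers (Pd d) h h') \<and>
          d \<in> set (Ph h) \<and> (\<forall>d'. (d', h) \<in> M \<longrightarrow> prefers (Ph h) d d'))"

definition valid_profile ::
  "'d set \<Rightarrow> 'h set \<Rightarrow> ('h \<Rightarrow> 'd list) \<Rightarrow> ('d \<Rightarrow> 'h list) \<Rightarrow> bool" where
  "valid_profile D H Ph Pd \<longleftrightarrow> (\<forall>h\<in>H. valid_pref D (Ph h)) \<and> (\<forall>d\<in>D. valid_pref H (Pd d))"

definition adequate ::
  "'d set \<Rightarrow> 'h set \<Rightarrow> ('h \<Rightarrow> nat) \<Rightarrow> ('d \<Rightarrow> nat) \<Rightarrow> ('h \<Rightarrow> 'd list) \<Rightarrow> ('d \<Rightarrow> 'h list) \<Rightarrow> bool" where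
  "adequate D H iota kappa Ph Pd \<longleftrightarrow> stable D H Ph Pd (final_matching D H iota kappa Ph Pd)"

definition globally_adequate ::
  "'d set \<Rightarrow> 'h set \<Rightarrow> ('h \<Rightarrow> nat) \<Rightarrow> ('d \<Rightarrow> nat) \<Rightarrow> bool" where
  "globally_adequate D H iota kappa \<longleftrightarrow>
     (\<forall>Ph Pd. valid_profile D H Ph Pd \<longrightarrow> adequate D H iota kappa Ph Pd)"

end

(*
  Sufficiency. Let (d, h) block the final matching. Step 2 is stable for the restricted
  preferences, so (h, d) was not an interview pair, and by pairwise stability of step 1 one
  side, say h, spent all iota h interviews on doctors it ranks above d. Each of them is matched
  in step 2, and not to h: otherwise h would hold a doctor it prefers to d. With unit
  capacities such a doctor would have two interviews; otherwise these doctors and their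
  distinct partners show iota h < min |D| |H|.

  Necessity. If, say, kappa d < min |D| |H| while the relevant hospitals can interview two
  doctors, let d rank kappa d hospitals first, each of which ranks its own doctor first and d
  second; d then spends all her interviews there, never interviews her last choice h, and both
  d and h stay unmatched. The remaining cases are one-slot instances of the same profile.

  Once both steps are described only by the pairwise stability of their outcomes, the whole
  argument is symmetric in doctors and hospitals, and it suffices to treat one side.
*)
theory Submission
  imports Defs
begin

definition ranked_above :: "'b list \<Rightarrow> 'b \<Rightarrow> 'b set" where
  "ranked_above l x = set (takeWhile (\<lambda>y. y \<noteq> x) l)"

lemma ranked_above_Nil [simp]: "ranked_above [] x = {}"
  by (simp add: ranked_above_def)

lemma ranked_above_Cons [simp]:
  "ranked_above (y # l) x = (if y = x then {} else insert y (ranked_above l x))"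
  by (cases "y = x") (simp_all add: ranked_above_def)

definition count_above :: "('b \<Rightarrow> bool) \<Rightarrow> 'b list \<Rightarrow> 'b \<Rightarrow> nat" where
  "count_above P l x = length (filter P (takeWhile (\<lambda>y. y \<noteq> x) l))"

lemma count_above_Nil [simp]: "count_above P [] x = 0"
  by (simp add: count_above_def)

lemma count_above_Cons [simp]:
  "count_above P (y # l) x =
     (if y = x then 0 else if P y then Suc (count_above P l x) else count_above P l x)"
  by (cases "y = x"; cases "P y") (simp_all add: count_above_def)

lemma in_set_take_filter_iff:
  "x \<in> set (take q (filter P l)) \<longleftrightarrow> x \<in> set l \<and> P x \<and> count_above P l x < q"
proof (induction l arbitrary: q)
  case (Cons y l)
  then show ?case
    by (cases q; cases "y = x") (auto dest: in_set_takeD)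
qed simp

lemma count_above_mono: "(\<And>y. P y \<Longrightarrow> Q y) \<Longrightarrow> count_above P l x \<le> count_above Q l x"
  by (induction l) auto

lemma count_above_take_filter:
  "q \<le> count_above P l x \<Longrightarrow> q \<le> count_above (\<lambda>y. y \<in> set (take q (filter P l))) l x"
proof (induction l arbitrary: q)
  case (Cons y l)
  show ?case
  proof (cases "y \<noteq> x \<and> P y \<and> q > 0")
    case True
    then obtain q' where q: "q = Suc q'" by (metis gr0_implies_Suc)
    have "q' \<le> count_above (\<lambda>z. z \<in> set (take q' (filter P l))) l x"
      using Cons True q by auto
    also have "\<dots> \<le> count_above (\<lambda>z. z \<in> set (take q (filter P (y # l)))) l x"
      by (rule count_above_mono) (simp add: True q)
    finally show ?thesis using True q by simp
  next
    case False
    then show ?thesis using Cons by (auto dest: in_set_takeD)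
  qed
qed simp

lemma count_above_pos_iff: "0 < count_above P l x \<longleftrightarrow> (\<exists>y\<in>ranked_above l x. P y)"
  by (simp add: count_above_def ranked_above_def filter_empty_conv)

lemma count_above_eq_card:
  "distinct l \<Longrightarrow> count_above P l x = card {y \<in> ranked_above l x. P y}"
  by (simp add: count_above_def ranked_above_def distinct_length_filter distinct_takeWhile
      Collect_conj_eq Int_commute)

lemma count_above_append:
  "x \<in> set l \<Longrightarrow> count_above P (l @ l') x = count_above P l x"
  by (simp add: count_above_def)

lemma count_above_less_length: "x \<in> set l \<Longrightarrow> count_above P l x < length l"
proof (induction l)
  case (Cons y l)
  then show ?case by (cases "y = x") auto
qed simp

lemma ranked_above_subset: "ranked_above l x \<subseteq> set l - {x}"
  by (auto simp: ranked_above_def dest: set_takeWhileD)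

lemma ranked_above_filter: "Q x \<Longrightarrow> ranked_above (filter Q l) x \<subseteq> ranked_above l x"
  by (induction l) auto

lemma ranked_above_trans: "y \<in> ranked_above l x \<Longrightarrow> ranked_above l y \<subseteq> ranked_above l x"
  by (induction l) (auto split: if_splits)

lemma not_prefers_if_ranked_above:
  assumes "distinct l" and "y \<in> ranked_above l x"
  shows "\<not> prefers l x y"
proof
  let ?us = "takeWhile (\<lambda>z. z \<noteq> x) l"
  assume "prefers l x y"
  moreover have "y \<in> set l" using assms(2) ranked_above_subset by fast
  ultimately obtain i j where ij: "i < j" "j < length l" "l ! i = x" "l ! j = y"
    unfolding prefers_def by blast
  obtain j' where j': "j' < length ?us" "?us ! j' = y"
    using assms(2) by (auto simp: ranked_above_def in_set_conv_nth)
  have "j' < length l" using j' length_takeWhile_le order.strict_trans2 by blast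
  moreover have "l ! j' = y" using j' by (simp add: takeWhile_nth)
  ultimately have "j = j'" using ij nth_eq_iff_index_eq[OF assms(1)] by metis
  then have "x \<in> set ?us" using ij j' by (metis in_set_conv_nth order.strict_trans takeWhile_nth)
  then show False by (auto dest: set_takeWhileD)
qed

lemma card_le_if_subset_take: "S \<subseteq> set (take q l) \<Longrightarrow> card S \<le> q"
  by (metis card_length card_mono dual_order.trans length_take min.bounded_iff finite_set)

lemma not_prefers_refl: "distinct l \<Longrightarrow> \<not> prefers l x x"
  by (auto simp: prefers_def nth_eq_iff_index_eq)

section \<open>Pairwise stability of deferred acceptance\<close>

text \<open>In the last clause a pair outside M does not block because one side already has its
  quota of partners ranked above the other; with the capacity clauses this is the usual notion.\<close>
definition pairwise_stable ::
  "'a set \<Rightarrow> 'b set \<Rightarrow> ('a \<Rightarrow> 'b list) \<Rightarrow> ('b \<Rightarrow> 'a list) \<Rightarrow> ('a \<Rightarrow> nat) \<Rightarrow> ('b \<Rightarrow> nat)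
    \<Rightarrow> ('a \<times> 'b) set \<Rightarrow> bool" where
  "pairwise_stable A B pa pb qa qb M \<longleftrightarrow>
     (\<forall>(a, b)\<in>M. a \<in> A \<and> b \<in> B \<and> b \<in> set (pa a) \<and> a \<in> set (pb b)) \<and>
     (\<forall>a. card {b. (a, b) \<in> M} \<le> qa a) \<and> (\<forall>b. card {a. (a, b) \<in> M} \<le> qb b) \<and>
     (\<forall>a\<in>A. \<forall>b\<in>B. b \<in> set (pa a) \<longrightarrow> a \<in> set (pb b) \<longrightarrow> (a, b) \<notin> M \<longrightarrow>
        qa a \<le> count_above (\<lambda>b'. (a, b') \<in> M) (pa a) b \<or>
        qb b \<le> count_above (\<lambda>a'. (a', b) \<in> M) (pb b) a)"

context
  fixes A B pa pb qa qb M
  assumes stable: "pairwise_stable A B pa pb qa qb M"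
begin

lemma pairwise_stable_acceptable:
  "(a, b) \<in> M \<Longrightarrow> a \<in> A \<and> b \<in> B \<and> b \<in> set (pa a) \<and> a \<in> set (pb b)"
  using stable unfolding pairwise_stable_def by blast

lemma pairwise_stable_card_left: "card {b. (a, b) \<in> M} \<le> qa a"
  using stable unfolding pairwise_stable_def by blast

lemma pairwise_stable_card_right: "card {a. (a, b) \<in> M} \<le> qb b"
  using stable unfolding pairwise_stable_def by blast

lemma pairwise_stable_no_blocking:
  "\<lbrakk>a \<in> A; b \<in> B; b \<in> set (pa a); a \<in> set (pb b); (a, b) \<notin> M\<rbrakk> \<Longrightarrow>
     qa a \<le> count_above (\<lambda>b'. (a, b') \<in> M) (pa a) b \<or>
     qb b \<le> count_above (\<lambda>a'. (a', b) \<in> M) (pb b) a"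
  using stable unfolding pairwise_stable_def by blast

lemma pairwise_stable_converse: "pairwise_stable B A pb pa qb qa (M\<inverse>)"
  using stable unfolding pairwise_stable_def by (simp add: disj_commute) blast

lemma pairwise_stable_unique_left:
  assumes "finite B" "qa a \<le> 1" "(a, b) \<in> M" "(a, b') \<in> M"
  shows "b = b'"
proof -
  have "{b. (a, b) \<in> M} \<subseteq> B" using pairwise_stable_acceptable by blast
  then have "finite {b. (a, b) \<in> M}" using assms(1) finite_subset by blast
  moreover have "card {b. (a, b) \<in> M} \<le> 1"
    using pairwise_stable_card_left[of a] assms(2) by linarith
  ultimately show ?thesis using assms(3,4) card_le_Suc0_iff_eq by fastforce
qed

end

lemma pairwise_stable_unique_right:
  assumes "pairwise_stable A B pa pb qa qb M" "finite A" "qb b \<le> 1" "(a, b) \<in> M" "(a', b) \<in> M"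
  shows "a = a'"
  using pairwise_stable_unique_left[OF pairwise_stable_converse[OF assms(1)]] assms(2-) by simp

context
  fixes A :: "'a set" and pa :: "'a \<Rightarrow> 'b list" and pb :: "'b \<Rightarrow> 'a list"
    and qa :: "'a \<Rightarrow> nat" and qb :: "'b \<Rightarrow> nat"
begin

lemma da_proposals_subset: "da_proposals A pa qa R \<subseteq> (SIGMA a:A. set (pa a))"
  unfolding da_proposals_def by (auto dest: in_set_takeD)

lemma da_proposals_not_rejected: "(a, b) \<in> da_proposals A pa qa R \<Longrightarrow> (a, b) \<notin> R"
  unfolding da_proposals_def by (auto dest: in_set_takeD)

lemma da_held_subset: "da_held pb qb Pr \<subseteq> Pr"
  unfolding da_held_def by auto

lemma da_step_increasing: "R \<subseteq> da_step A pa pb qa qb R"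
  unfolding da_step_def Let_def by auto

lemma da_step_iterate_subset: "(da_step A pa pb qa qb ^^ n) {} \<subseteq> (SIGMA a:A. set (pa a))"
  by (induction n) (use da_proposals_subset in \<open>auto simp: da_step_def Let_def\<close>)

lemma card_Sigma_le_da_rounds:
  "finite A \<Longrightarrow> card (SIGMA a:A. set (pa a)) \<le> da_rounds A pa"
  unfolding da_rounds_def by (simp add: card_SigmaI sum_mono card_length)

lemma da_step_iterate_progress:
  assumes "finite A"
  shows "da_step A pa pb qa qb ((da_step A pa pb qa qb ^^ n) {}) = (da_step A pa pb qa qb ^^ n) {}
         \<or> n \<le> card ((da_step A pa pb qa qb ^^ n) {})"
proof (induction n)
  case (Suc n)
  let ?f = "da_step A pa pb qa qb"
  let ?R = "(?f ^^ n) {}"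
  show ?case
  proof (cases "?f ?R = ?R")
    case False
    have "finite (?f ?R)"
      using da_step_iterate_subset[of "Suc n"] assms by (auto intro: finite_subset)
    moreover have "?R \<subset> ?f ?R" using False da_step_increasing by blast
    ultimately have "card ?R < card (?f ?R)" by (simp add: psubset_card_mono)
    then show ?thesis using Suc.IH False by simp
  qed simp
qed simp

lemma da_step_fixpoint:
  assumes "finite A"
  defines "R \<equiv> (da_step A pa pb qa qb ^^ da_rounds A pa) {}"
  shows "da_step A pa pb qa qb R = R"
proof (rule ccontr)
  let ?U = "SIGMA a:A. set (pa a)"
  assume "da_step A pa pb qa qb R \<noteq> R"
  then have "card ?U \<le> card R"
    using da_step_iterate_progress[OF assms(1)] card_Sigma_le_da_rounds[OF assms(1)]
    unfolding R_def by fastforce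
  moreover have "finite ?U" using assms(1) by simp
  ultimately have "R = ?U" using card_seteq da_step_iterate_subset unfolding R_def by blast
  then have "da_step A pa pb qa qb R \<subseteq> R"
    using da_step_iterate_subset[of "Suc (da_rounds A pa)"] unfolding R_def by simp
  then show False using da_step_increasing \<open>da_step A pa pb qa qb R \<noteq> R\<close> by blast
qed

lemma da_eq_proposals:
  assumes "finite A"
  shows "da A pa pb qa qb = da_proposals A pa qa ((da_step A pa pb qa qb ^^ da_rounds A pa) {})"
proof -
  let ?R = "(da_step A pa pb qa qb ^^ da_rounds A pa) {}"
  let ?Pr = "da_proposals A pa qa ?R"
  have "?Pr - da_held pb qb ?Pr \<subseteq> ?R"
    using da_step_fixpoint[OF assms] unfolding da_step_def Let_def by blast
  then have "?Pr \<subseteq> da_held pb qb ?Pr" using da_proposals_not_rejected by fast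
  then show ?thesis using da_held_subset unfolding da_def Let_def by blast
qed

lemma da_held_proposed_again:
  "da_held pb qb (da_proposals A pa qa R) \<subseteq> da_proposals A pa qa (da_step A pa pb qa qb R)"
proof safe
  fix a b
  let ?Pr = "da_proposals A pa qa R"
  let ?R' = "da_step A pa pb qa qb R"
  assume held: "(a, b) \<in> da_held pb qb ?Pr"
  then have "(a, b) \<in> ?Pr" using da_held_subset by blast
  then have "a \<in> A" "b \<in> set (pa a)" "count_above (\<lambda>b'. (a, b') \<notin> R) (pa a) b < qa a"
    by (auto simp: da_proposals_def in_set_take_filter_iff)
  moreover have "(a, b) \<notin> ?R'"
    using held da_proposals_not_rejected[OF \<open>(a, b) \<in> ?Pr\<close>] unfolding da_step_def Let_def by auto
  moreover have
    "count_above (\<lambda>b'. (a, b') \<notin> ?R') (pa a) b \<le> count_above (\<lambda>b'. (a, b') \<notin> R) (pa a) b"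
    by (rule count_above_mono) (use da_step_increasing in blast)
  ultimately show "(a, b) \<in> da_proposals A pa qa ?R'"
    by (auto simp: da_proposals_def in_set_take_filter_iff)
qed

lemma da_receiver_stays_full:
  assumes "qb b \<le> count_above (\<lambda>a'. (a', b) \<in> da_proposals A pa qa R) (pb b) a"
  shows "qb b \<le>
    count_above (\<lambda>a'. (a', b) \<in> da_proposals A pa qa (da_step A pa pb qa qb R)) (pb b) a"
proof -
  let ?Pr = "da_proposals A pa qa R"
  have "qb b \<le>
      count_above (\<lambda>a'. a' \<in> set (take (qb b) (filter (\<lambda>a'. (a', b) \<in> ?Pr) (pb b)))) (pb b) a"
    by (rule count_above_take_filter[OF assms])
  also have "\<dots> \<le> count_above (\<lambda>a'. (a', b) \<in> da_held pb qb ?Pr) (pb b) a"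
    by (rule count_above_mono) (auto simp: da_held_def in_set_take_filter_iff)
  also have "\<dots> \<le>
      count_above (\<lambda>a'. (a', b) \<in> da_proposals A pa qa (da_step A pa pb qa qb R)) (pb b) a"
    by (rule count_above_mono) (use da_held_proposed_again in blast)
  finally show ?thesis .
qed

text \<open>A receiver rejects a only while holding qb b proposers it ranks above a, and held
  proposers propose again.\<close>
lemma da_rejected_receiver_full:
  assumes "(a, b) \<in> (da_step A pa pb qa qb ^^ n) {}" and "a \<in> set (pb b)"
  shows "qb b \<le>
    count_above (\<lambda>a'. (a', b) \<in> da_proposals A pa qa ((da_step A pa pb qa qb ^^ n) {})) (pb b) a"
  using assms(1)
proof (induction n)
  case (Suc n)
  let ?R = "(da_step A pa pb qa qb ^^ n) {}"
  let ?Pr = "da_proposals A pa qa ?R"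
  have "qb b \<le> count_above (\<lambda>a'. (a', b) \<in> ?Pr) (pb b) a"
  proof (cases "(a, b) \<in> ?R")
    case False
    moreover have "(a, b) \<in> da_step A pa pb qa qb ?R" using Suc.prems by simp
    ultimately have "(a, b) \<in> ?Pr" "(a, b) \<notin> da_held pb qb ?Pr"
      unfolding da_step_def[of A pa pb qa qb ?R] Let_def by auto
    then show ?thesis using assms(2) by (auto simp: da_held_def in_set_take_filter_iff not_less)
  qed (rule Suc.IH)
  then show ?case using da_receiver_stays_full by simp
qed simp

lemma da_no_blocking:
  assumes "finite A" "a \<in> A" "b \<in> set (pa a)" "a \<in> set (pb b)" "(a, b) \<notin> da A pa pb qa qb"
  shows "qa a \<le> count_above (\<lambda>b'. (a, b') \<in> da A pa pb qa qb) (pa a) b \<or>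
         qb b \<le> count_above (\<lambda>a'. (a', b) \<in> da A pa pb qa qb) (pb b) a"
proof (cases "(a, b) \<in> (da_step A pa pb qa qb ^^ da_rounds A pa) {}")
  case True
  then show ?thesis
    using da_rejected_receiver_full assms(4) da_eq_proposals[OF assms(1)] by simp
next
  case False
  let ?R = "(da_step A pa pb qa qb ^^ da_rounds A pa) {}"
  let ?L = "take (qa a) (filter (\<lambda>b'. (a, b') \<notin> ?R) (pa a))"
  have M: "da A pa pb qa qb = da_proposals A pa qa ?R" by (rule da_eq_proposals[OF assms(1)])
  then have "qa a \<le> count_above (\<lambda>b'. (a, b') \<notin> ?R) (pa a) b"
    using assms(2,3,5) False by (auto simp: da_proposals_def in_set_take_filter_iff not_less)
  then have "qa a \<le> count_above (\<lambda>b'. b' \<in> set ?L) (pa a) b"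
    by (rule count_above_take_filter)
  also have "\<dots> \<le> count_above (\<lambda>b'. (a, b') \<in> da A pa pb qa qb) (pa a) b"
    by (rule count_above_mono) (simp add: M da_proposals_def assms(2))
  finally show ?thesis ..
qed

lemma da_pairwise_stable:
  assumes "finite A" and "\<forall>a\<in>A. set (pa a) \<subseteq> B"
  shows "pairwise_stable A B pa pb qa qb (da A pa pb qa qb)"
proof -
  let ?M = "da A pa pb qa qb"
  let ?R = "(da_step A pa pb qa qb ^^ da_rounds A pa) {}"
  let ?Pr = "da_proposals A pa qa ?R"
  have held: "?M = da_held pb qb ?Pr" by (simp add: da_def)
  have proposed: "?M = ?Pr" by (rule da_eq_proposals[OF assms(1)])
  have "a \<in> A \<and> b \<in> B \<and> b \<in> set (pa a) \<and> a \<in> set (pb b)" if "(a, b) \<in> ?M" for a b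
  proof -
    have "a \<in> A" "b \<in> set (pa a)"
      using that da_proposals_subset unfolding proposed by blast+
    moreover have "a \<in> set (pb b)"
      using that unfolding held da_held_def by (auto dest: in_set_takeD)
    ultimately show ?thesis using assms(2) by blast
  qed
  moreover have "card {b. (a, b) \<in> ?M} \<le> qa a" for a
    by (rule card_le_if_subset_take[of _ _ "filter (\<lambda>b'. (a, b') \<notin> ?R) (pa a)"])
      (auto simp: proposed da_proposals_def)
  moreover have "card {a. (a, b) \<in> ?M} \<le> qb b" for b
    by (rule card_le_if_subset_take[of _ _ "filter (\<lambda>a'. (a', b) \<in> ?Pr) (pb b)"])
      (auto simp: held da_held_def)
  moreover note da_no_blocking[OF assms(1)]
  ultimately show ?thesis unfolding pairwise_stable_def by fast
qed

end

section \<open>Stability of the two-stage matching\<close>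

definition blocking_pair :: "('h \<Rightarrow> 'd list) \<Rightarrow> ('d \<Rightarrow> 'h list) \<Rightarrow> ('d \<times> 'h) set \<Rightarrow> 'd \<Rightarrow> 'h \<Rightarrow> bool" where
  "blocking_pair Ph Pd M d h \<longleftrightarrow>
     h \<in> set (Pd d) \<and> (\<forall>h'. (d, h') \<in> M \<longrightarrow> prefers (Pd d) h h') \<and>
     d \<in> set (Ph h) \<and> (\<forall>d'. (d', h) \<in> M \<longrightarrow> prefers (Ph h) d d')"

lemma stable_iff_no_blocking_pair:
  "stable D H Ph Pd M \<longleftrightarrow> \<not> (\<exists>d\<in>D. \<exists>h\<in>H. blocking_pair Ph Pd M d h)"
  by (simp add: stable_def blocking_pair_def)

lemma blocking_pair_converse: "blocking_pair Pd Ph (M\<inverse>) h d \<longleftrightarrow> blocking_pair Ph Pd M d h"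
  by (auto simp: blocking_pair_def)

lemma valid_profile_swap: "valid_profile H D Pd Ph \<longleftrightarrow> valid_profile D H Ph Pd"
  by (auto simp: valid_profile_def)

text \<open>The two steps of the mechanism, abstracted to the pairwise stability of their outcomes
  nu and mu; the assumptions are invariant under exchanging the two sides.\<close>
locale two_stage =
  fixes D :: "'d set" and H :: "'h set" and Ph :: "'h \<Rightarrow> 'd list" and Pd :: "'d \<Rightarrow> 'h list"
    and iota :: "'h \<Rightarrow> nat" and kappa :: "'d \<Rightarrow> nat"
    and nu :: "('h \<times> 'd) set" and mu :: "('d \<times> 'h) set"
  assumes finite_D: "finite D" and finite_H: "finite H"
    and valid: "valid_profile D H Ph Pd"
    and nu_stable: "pairwise_stable H D Ph Pd iota kappa nu"
    and mu_stable: "pairwise_stable D H (\<lambda>d. filter (\<lambda>h. (h, d) \<in> nu) (Pd d))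
                      (\<lambda>h. filter (\<lambda>d. (h, d) \<in> nu) (Ph h)) (\<lambda>_. 1) (\<lambda>_. 1) mu"

lemma two_stage_swap:
  assumes "two_stage D H Ph Pd iota kappa nu mu"
  shows "two_stage H D Pd Ph kappa iota (nu\<inverse>) (mu\<inverse>)"
proof -
  interpret two_stage D H Ph Pd iota kappa nu mu by fact
  show ?thesis
  proof
    show "valid_profile H D Pd Ph" using valid valid_profile_swap by blast
    show "pairwise_stable D H Pd Ph kappa iota (nu\<inverse>)"
      by (rule pairwise_stable_converse[OF nu_stable])
    show "pairwise_stable H D (\<lambda>h. filter (\<lambda>d. (d, h) \<in> nu\<inverse>) (Ph h))
            (\<lambda>d. filter (\<lambda>h. (d, h) \<in> nu\<inverse>) (Pd d)) (\<lambda>_. 1) (\<lambda>_. 1) (mu\<inverse>)"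
      using pairwise_stable_converse[OF mu_stable] by simp
  qed (fact finite_D finite_H)+
qed

lemma two_stage_final_matching:
  assumes "finite D" and "finite H" and "valid_profile D H Ph Pd"
  shows "two_stage D H Ph Pd iota kappa (interview_matching H iota kappa Ph Pd)
           (final_matching D H iota kappa Ph Pd)"
proof
  let ?nu = "interview_matching H iota kappa Ph Pd"
  show "pairwise_stable H D Ph Pd iota kappa ?nu"
    unfolding interview_matching_def
    by (rule da_pairwise_stable) (use assms in \<open>auto simp: valid_profile_def valid_pref_def\<close>)
  show "pairwise_stable D H (\<lambda>d. filter (\<lambda>h. (h, d) \<in> ?nu) (Pd d))
          (\<lambda>h. filter (\<lambda>d. (h, d) \<in> ?nu) (Ph h)) (\<lambda>_. 1) (\<lambda>_. 1)
          (final_matching D H iota kappa Ph Pd)"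
    unfolding final_matching_def Let_def
    by (rule da_pairwise_stable) (use assms in \<open>auto simp: valid_profile_def valid_pref_def\<close>)
qed (use assms in auto)

context two_stage
begin

lemma distinct_Ph: "h \<in> H \<Longrightarrow> distinct (Ph h)"
  and distinct_Pd: "d \<in> D \<Longrightarrow> distinct (Pd d)"
  and set_Ph_subset: "h \<in> H \<Longrightarrow> set (Ph h) \<subseteq> D"
  and set_Pd_subset: "d \<in> D \<Longrightarrow> set (Pd d) \<subseteq> H"
  using valid by (auto simp: valid_profile_def valid_pref_def)

lemma nu_acceptable: "(h, d) \<in> nu \<Longrightarrow> h \<in> H \<and> d \<in> D \<and> d \<in> set (Ph h) \<and> h \<in> set (Pd d)"
  using pairwise_stable_acceptable[OF nu_stable] .

lemma mu_acceptable: "(d, h) \<in> mu \<Longrightarrow> (h, d) \<in> nu \<and> d \<in> D \<and> h \<in> H \<and> h \<in> set (Pd d) \<and> d \<in> set (Ph h)"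
  using pairwise_stable_acceptable[OF mu_stable] by auto

lemma blocking_pair_no_better_partners:
  assumes "blocking_pair Ph Pd mu d h" and "d \<in> D" and "h \<in> H"
  shows "h' \<in> ranked_above (Pd d) h \<Longrightarrow> (d, h') \<notin> mu"
    and "d' \<in> ranked_above (Ph h) d \<Longrightarrow> (d', h) \<notin> mu"
proof -
  show "(d, h') \<notin> mu" if "h' \<in> ranked_above (Pd d) h"
    using that assms(1) not_prefers_if_ranked_above[OF distinct_Pd[OF assms(2)]]
    unfolding blocking_pair_def by blast
  show "(d', h) \<notin> mu" if "d' \<in> ranked_above (Ph h) d"
    using that assms(1) not_prefers_if_ranked_above[OF distinct_Ph[OF assms(3)]]
    unfolding blocking_pair_def by blast
qed

lemma blocking_pair_not_interviewed:
  assumes blocking: "blocking_pair Ph Pd mu d h" and "d \<in> D" and "h \<in> H"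
  shows "(h, d) \<notin> nu"
proof
  assume "(h, d) \<in> nu"
  then have acc: "h \<in> set (filter (\<lambda>h. (h, d) \<in> nu) (Pd d))"
      "d \<in> set (filter (\<lambda>d. (h, d) \<in> nu) (Ph h))"
    using blocking unfolding blocking_pair_def by auto
  have "(d, h) \<notin> mu"
    using blocking not_prefers_refl[OF distinct_Pd[OF \<open>d \<in> D\<close>]] unfolding blocking_pair_def by blast
  from pairwise_stable_no_blocking[OF mu_stable \<open>d \<in> D\<close> \<open>h \<in> H\<close> acc this]
  consider h' where "h' \<in> ranked_above (filter (\<lambda>h. (h, d) \<in> nu) (Pd d)) h" "(d, h') \<in> mu"
    | d' where "d' \<in> ranked_above (filter (\<lambda>d. (h, d) \<in> nu) (Ph h)) d" "(d', h) \<in> mu"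
    by (auto simp: Suc_le_eq count_above_pos_iff)
  then show False
  proof cases
    case (1 h')
    then show False using blocking_pair_no_better_partners(1)[OF assms]
        ranked_above_filter[of "\<lambda>h. (h, d) \<in> nu" h "Pd d"] \<open>(h, d) \<in> nu\<close> by blast
  next
    case (2 d')
    then show False using blocking_pair_no_better_partners(2)[OF assms]
        ranked_above_filter[of "\<lambda>d. (h, d) \<in> nu" d "Ph h"] \<open>(h, d) \<in> nu\<close> by blast
  qed
qed

text \<open>h cannot hold d', since it prefers d to its partner, and cannot have refused d' for a
  doctor it ranks above d', hence above d.\<close>
lemma preferred_interviewee_matched_elsewhere:
  assumes blocking: "blocking_pair Ph Pd mu d h" and "d \<in> D" and "h \<in> H"
    and "(h, d') \<in> nu" and above: "d' \<in> ranked_above (Ph h) d"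
  shows "\<exists>h'. (d', h') \<in> mu \<and> h' \<noteq> h"
proof (rule ccontr)
  assume none: "\<not> (\<exists>h'. (d', h') \<in> mu \<and> h' \<noteq> h)"
  have "d' \<in> D" and acc: "h \<in> set (filter (\<lambda>h. (h, d') \<in> nu) (Pd d'))"
      "d' \<in> set (filter (\<lambda>d. (h, d) \<in> nu) (Ph h))"
    using nu_acceptable[OF \<open>(h, d') \<in> nu\<close>] \<open>(h, d') \<in> nu\<close> by auto
  moreover have "(d', h) \<notin> mu" using blocking_pair_no_better_partners(2)[OF assms(1-3) above] .
  ultimately have "1 \<le> count_above (\<lambda>h'. (d', h') \<in> mu) (filter (\<lambda>h. (h, d') \<in> nu) (Pd d')) h \<or>
      1 \<le> count_above (\<lambda>d''. (d'', h) \<in> mu) (filter (\<lambda>d. (h, d) \<in> nu) (Ph h)) d'"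
    using pairwise_stable_no_blocking[OF mu_stable \<open>d' \<in> D\<close> \<open>h \<in> H\<close> acc] by blast
  then consider h' where "h' \<in> ranked_above (filter (\<lambda>h. (h, d') \<in> nu) (Pd d')) h" "(d', h') \<in> mu"
    | d'' where "d'' \<in> ranked_above (filter (\<lambda>d. (h, d) \<in> nu) (Ph h)) d'" "(d'', h) \<in> mu"
    by (auto simp: Suc_le_eq count_above_pos_iff)
  then show False
  proof cases
    case (1 h')
    then show False using none ranked_above_subset by fast
  next
    case (2 d'')
    then have "d'' \<in> ranked_above (Ph h) d"
      using ranked_above_filter[of "\<lambda>d. (h, d) \<in> nu" d' "Ph h"] ranked_above_trans[OF above]
        \<open>(h, d') \<in> nu\<close> by blast
    then show False using blocking_pair_no_better_partners(2)[OF assms(1-3)] 2 by blast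
  qed
qed

lemma hospital_quota_bound:
  assumes blocking: "blocking_pair Ph Pd mu d h" and "d \<in> D" and "h \<in> H"
    and full: "iota h \<le> count_above (\<lambda>d'. (h, d') \<in> nu) (Ph h) d"
  shows "iota h < min (card D) (card H)"
proof -
  define S where "S = {d' \<in> ranked_above (Ph h) d. (h, d') \<in> nu}"
  have "count_above (\<lambda>d'. (h, d') \<in> nu) (Ph h) d = card S"
    unfolding S_def by (rule count_above_eq_card[OF distinct_Ph[OF \<open>h \<in> H\<close>]])
  then have "iota h \<le> card S" using full by simp
  moreover have "S \<subseteq> D - {d}"
    using ranked_above_subset[of "Ph h" d] set_Ph_subset[OF \<open>h \<in> H\<close>] unfolding S_def by auto
  then have "card S \<le> card D - 1"
    using card_mono[OF _ \<open>S \<subseteq> D - {d}\<close>] finite_D \<open>d \<in> D\<close> by (simp add: card_Diff_singleton)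
  moreover have "card S \<le> card (H - {h})"
  proof (rule card_le_if_inj_on_rel[where r = "\<lambda>d' h'. (d', h') \<in> mu"])
    show "finite (H - {h})" using finite_H by simp
    show "\<exists>h'. h' \<in> H - {h} \<and> (d', h') \<in> mu" if d': "d' \<in> S" for d'
    proof -
      obtain h' where "(d', h') \<in> mu" "h' \<noteq> h"
        using preferred_interviewee_matched_elsewhere[OF assms(1-3)] d' unfolding S_def by blast
      then show ?thesis using mu_acceptable by blast
    qed
    show "d1 = d2" if "(d1, h') \<in> mu" "(d2, h') \<in> mu" for d1 d2 h'
      using pairwise_stable_unique_right[OF mu_stable finite_D] that by simp
  qed
  moreover have "0 < card D" "0 < card H"
    using finite_D finite_H \<open>d \<in> D\<close> \<open>h \<in> H\<close> by (auto simp: card_gt_0_iff)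
  ultimately show ?thesis using \<open>h \<in> H\<close> finite_H by (simp add: card_Diff_singleton, linarith)
qed

lemma hospital_quota_not_exhausted:
  assumes unit_or_large: "(\<forall>d\<in>D. kappa d = 1) \<and> (\<forall>h\<in>H. iota h = 1) \<or>
      (\<forall>d\<in>D. min (card D) (card H) \<le> kappa d) \<and> (\<forall>h\<in>H. min (card D) (card H) \<le> iota h)"
    and blocking: "blocking_pair Ph Pd mu d h" and "d \<in> D" and "h \<in> H"
  shows "count_above (\<lambda>d'. (h, d') \<in> nu) (Ph h) d < iota h"
proof (rule ccontr)
  assume "\<not> ?thesis"
  then have full: "iota h \<le> count_above (\<lambda>d'. (h, d') \<in> nu) (Ph h) d" by simp
  from unit_or_large show False
  proof
    assume unit: "(\<forall>d\<in>D. kappa d = 1) \<and> (\<forall>h\<in>H. iota h = 1)"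
    then obtain d' where d': "d' \<in> ranked_above (Ph h) d" "(h, d') \<in> nu"
      using full \<open>h \<in> H\<close> by (auto simp: Suc_le_eq count_above_pos_iff)
    then obtain h' where "(d', h') \<in> mu" "h' \<noteq> h"
      using preferred_interviewee_matched_elsewhere[OF blocking \<open>d \<in> D\<close> \<open>h \<in> H\<close>] by blast
    then have "(h', d') \<in> nu" "d' \<in> D" using mu_acceptable by blast+
    then show False
      using pairwise_stable_unique_right[OF nu_stable finite_H] unit d'(2) \<open>h' \<noteq> h\<close> by force
  next
    assume "(\<forall>d\<in>D. min (card D) (card H) \<le> kappa d) \<and> (\<forall>h\<in>H. min (card D) (card H) \<le> iota h)"
    then show False using hospital_quota_bound[OF blocking \<open>d \<in> D\<close> \<open>h \<in> H\<close> full] \<open>h \<in> H\<close> by auto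
  qed
qed

text \<open>By the symmetry of the assumptions the hospital-side bound also limits the doctor, so
  neither side of the interview pair can be full and the pair would have interviewed.\<close>
theorem stable_if_unit_or_large:
  assumes unit_or_large: "(\<forall>d\<in>D. kappa d = 1) \<and> (\<forall>h\<in>H. iota h = 1) \<or>
      (\<forall>d\<in>D. min (card D) (card H) \<le> kappa d) \<and> (\<forall>h\<in>H. min (card D) (card H) \<le> iota h)"
  shows "stable D H Ph Pd mu"
  unfolding stable_iff_no_blocking_pair
proof clarify
  fix d h
  assume blocking: "blocking_pair Ph Pd mu d h" and "d \<in> D" and "h \<in> H"
  interpret swapped: two_stage H D Pd Ph kappa iota "nu\<inverse>" "mu\<inverse>"
    by (rule two_stage_swap) unfold_locales
  have "(\<forall>h\<in>H. iota h = 1) \<and> (\<forall>d\<in>D. kappa d = 1) \<or>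
      (\<forall>h\<in>H. min (card H) (card D) \<le> iota h) \<and> (\<forall>d\<in>D. min (card H) (card D) \<le> kappa d)"
    using unit_or_large by (auto simp: min.commute)
  then have "count_above (\<lambda>h'. (h', d) \<in> nu) (Pd d) h < kappa d"
    using swapped.hospital_quota_not_exhausted[of h d] blocking \<open>d \<in> D\<close> \<open>h \<in> H\<close>
    by (simp add: blocking_pair_converse)
  moreover have "count_above (\<lambda>d'. (h, d') \<in> nu) (Ph h) d < iota h"
    using hospital_quota_not_exhausted[OF unit_or_large blocking \<open>d \<in> D\<close> \<open>h \<in> H\<close>] .
  moreover have "(h, d) \<notin> nu" using blocking_pair_not_interviewed[OF blocking \<open>d \<in> D\<close> \<open>h \<in> H\<close>] .
  ultimately show False
    using pairwise_stable_no_blocking[OF nu_stable \<open>h \<in> H\<close> \<open>d \<in> D\<close>] blocking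
    unfolding blocking_pair_def by linarith
qed

section \<open>A profile with wasted interviews\<close>

text \<open>Each hospital x in ss and its doctor f x rank each other first, so they interview and
  match; x also interviews d, who thereby exhausts her interview capacity on ss and never
  interviews h, her last choice and the only hospital that wants her. Both end up unmatched.\<close>
context
  fixes d h ss and f :: "'h \<Rightarrow> 'd"
  assumes "d \<in> D" and "h \<in> H"
    and Ph_h: "Ph h = [d]" and Pd_d: "Pd d = ss @ [h]"
    and partners: "\<forall>x\<in>set ss. Ph x = [f x, d] \<and> Pd (f x) = [x]"
    and "length ss = kappa d" and quotas: "\<forall>x\<in>set ss. 2 \<le> iota x \<and> 1 \<le> kappa (f x)"
begin

lemma wasted_hospitals: "distinct ss" "h \<notin> set ss" "set ss \<subseteq> H"
proof -
  have "distinct (ss @ [h])" "set (ss @ [h]) \<subseteq> H"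
    using distinct_Pd[OF \<open>d \<in> D\<close>] set_Pd_subset[OF \<open>d \<in> D\<close>] Pd_d by auto
  then show "distinct ss" "h \<notin> set ss" "set ss \<subseteq> H" by auto
qed

lemma wasted_partner:
  assumes "x \<in> set ss"
  shows "Ph x = [f x, d]" "Pd (f x) = [x]" "f x \<in> D" "f x \<noteq> d"
  using partners distinct_Ph[of x] set_Ph_subset[of x] wasted_hospitals(3) assms by auto

lemma wasted_partner_interviewed:
  assumes x: "x \<in> set ss"
  shows "(x, f x) \<in> nu"
proof (rule ccontr)
  assume "(x, f x) \<notin> nu"
  with x wasted_hospitals(3) wasted_partner[OF x]
  have "iota x \<le> count_above (\<lambda>d'. (x, d') \<in> nu) (Ph x) (f x) \<or>
      kappa (f x) \<le> count_above (\<lambda>h'. (h', f x) \<in> nu) (Pd (f x)) x"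
    by (intro pairwise_stable_no_blocking[OF nu_stable]) auto
  then show False using quotas x wasted_partner[OF x] by auto
qed

lemma wasted_doctor_interviewed:
  assumes x: "x \<in> set ss"
  shows "(x, d) \<in> nu"
proof (rule ccontr)
  assume "(x, d) \<notin> nu"
  with x wasted_hospitals(3) \<open>d \<in> D\<close> wasted_partner[OF x] Pd_d
  have "iota x \<le> count_above (\<lambda>d'. (x, d') \<in> nu) (Ph x) d \<or>
      kappa d \<le> count_above (\<lambda>h'. (h', d) \<in> nu) (Pd d) x"
    by (intro pairwise_stable_no_blocking[OF nu_stable]) auto
  moreover have "count_above (\<lambda>d'. (x, d') \<in> nu) (Ph x) d < iota x"
    using quotas wasted_partner[OF x] x by auto
  moreover have "count_above (\<lambda>h'. (h', d) \<in> nu) (Pd d) x < kappa d"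
    using count_above_less_length[OF x] count_above_append[OF x] Pd_d \<open>length ss = kappa d\<close>
    by simp
  ultimately show False by linarith
qed

lemma wasted_last_choice_not_interviewed: "(h, d) \<notin> nu"
proof
  assume "(h, d) \<in> nu"
  then have "insert h (set ss) \<subseteq> {h'. (h', d) \<in> nu}" using wasted_doctor_interviewed by blast
  moreover have "finite {h'. (h', d) \<in> nu}"
    by (rule finite_subset[OF _ finite_H]) (use nu_acceptable in blast)
  ultimately have "card (insert h (set ss)) \<le> card {h'. (h', d) \<in> nu}"
    by (simp add: card_mono)
  also have "\<dots> \<le> kappa d" by (rule pairwise_stable_card_right[OF nu_stable])
  finally have "card (insert h (set ss)) \<le> kappa d" .
  then show False using wasted_hospitals \<open>length ss = kappa d\<close> by (simp add: distinct_card)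
qed

lemma wasted_partner_matched:
  assumes x: "x \<in> set ss"
  shows "(f x, x) \<in> mu"
proof (rule ccontr)
  let ?Pd_nu = "filter (\<lambda>h'. (h', f x) \<in> nu) (Pd (f x))"
  let ?Ph_nu = "filter (\<lambda>d'. (x, d') \<in> nu) (Ph x)"
  assume "(f x, x) \<notin> mu"
  with x wasted_hospitals(3) wasted_partner[OF x] wasted_partner_interviewed[OF x]
  have "1 \<le> count_above (\<lambda>h'. (f x, h') \<in> mu) ?Pd_nu x \<or>
      1 \<le> count_above (\<lambda>d'. (d', x) \<in> mu) ?Ph_nu (f x)"
    by (intro pairwise_stable_no_blocking[OF mu_stable]) auto
  then show False using wasted_partner_interviewed[OF x] wasted_partner[OF x] by simp
qed

lemma wasted_interviews_blocking_pair: "blocking_pair Ph Pd mu d h"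
proof -
  have "(d, h') \<notin> mu" for h'
  proof
    assume "(d, h') \<in> mu"
    then have "h' \<in> set ss"
      using mu_acceptable[of d h'] wasted_last_choice_not_interviewed Pd_d by auto
    then show False
      using pairwise_stable_unique_right[OF mu_stable finite_D _ wasted_partner_matched]
        \<open>(d, h') \<in> mu\<close> wasted_partner(4)
      by auto
  qed
  moreover have "(d', h) \<notin> mu" for d'
  proof
    assume "(d', h) \<in> mu"
    then have "(h, d') \<in> nu" "d' \<in> set (Ph h)" using mu_acceptable by blast+
    then show False using wasted_last_choice_not_interviewed Ph_h by simp
  qed
  ultimately show ?thesis using Ph_h Pd_d by (simp add: blocking_pair_def)
qed

end

end

lemma wasted_interviews_profile:
  assumes "d \<in> D" and "h \<in> H" and "S \<subseteq> H - {h}" and "finite S"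
    and "inj_on f S" and "f ` S \<subseteq> D - {d}"
  obtains Ph Pd ss where "valid_profile D H Ph Pd" "set ss = S" "length ss = card S"
    "Ph h = [d]" "Pd d = ss @ [h]" "\<forall>x\<in>S. Ph x = [f x, d] \<and> Pd (f x) = [x]"
proof -
  obtain ss where ss: "set ss = S" "distinct ss" using finite_distinct_list[OF \<open>finite S\<close>] by blast
  define Ph where "Ph x = (if x \<in> S then [f x, d] else if x = h then [d] else [])" for x
  define Pd where
    "Pd y = (if y = d then ss @ [h] else if y \<in> f ` S then [the_inv_into S f y] else [])" for y
  have "valid_profile D H Ph Pd"
    using assms ss the_inv_into_into[OF \<open>inj_on f S\<close>, of _ H]
    unfolding valid_profile_def valid_pref_def Ph_def Pd_def by auto
  moreover have "\<forall>x\<in>S. Ph x = [f x, d] \<and> Pd (f x) = [x]"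
    using assms the_inv_into_f_f[OF \<open>inj_on f S\<close>] unfolding Ph_def Pd_def by auto
  moreover have "Ph h = [d]" "Pd d = ss @ [h]" using assms unfolding Ph_def Pd_def by auto
  moreover have "length ss = card S" using ss distinct_card by metis
  ultimately show ?thesis using that ss(1) by blast
qed

lemma not_globally_adequate_if_blocking_pair:
  assumes "valid_profile D H Ph Pd" and "d \<in> D" and "h \<in> H"
    and "blocking_pair Ph Pd (final_matching D H iota kappa Ph Pd) d h"
  shows "\<not> globally_adequate D H iota kappa"
  using assms by (auto simp: globally_adequate_def adequate_def stable_iff_no_blocking_pair)

lemma not_globally_adequate_doctor_side:
  assumes "finite D" and "finite H" and "d \<in> D" and "h \<in> H" and "kappa d < card D"
    and "kappa d \<le> card {x \<in> H - {h}. 2 \<le> iota x}" and "\<forall>y\<in>D. 1 \<le> kappa y"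
  shows "\<not> globally_adequate D H iota kappa"
proof -
  obtain S where S: "S \<subseteq> {x \<in> H - {h}. 2 \<le> iota x}" "card S = kappa d" "finite S"
    using obtain_subset_with_card_n[OF assms(6)] by blast
  have "kappa d \<le> card (D - {d})" using assms(1,3,5) by (simp add: card_Diff_singleton)
  then obtain T where "T \<subseteq> D - {d}" "card T = kappa d" "finite T"
    by (rule obtain_subset_with_card_n)
  then obtain f where "bij_betw f S T" using finite_same_card_bij S(2,3) by metis
  then have "inj_on f S" "f ` S \<subseteq> D - {d}" using \<open>T \<subseteq> D - {d}\<close> by (auto simp: bij_betw_def)
  moreover have "S \<subseteq> H - {h}" using S(1) by blast
  ultimately obtain Ph Pd ss where profile: "valid_profile D H Ph Pd" "set ss = S"
    "length ss = card S" "Ph h = [d]" "Pd d = ss @ [h]" "\<forall>x\<in>S. Ph x = [f x, d] \<and> Pd (f x) = [x]"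
    using wasted_interviews_profile[OF assms(3,4) _ S(3)] by blast
  interpret two_stage D H Ph Pd iota kappa "interview_matching H iota kappa Ph Pd"
      "final_matching D H iota kappa Ph Pd"
    using two_stage_final_matching assms(1,2) profile(1) .
  have "\<forall>x\<in>set ss. Ph x = [f x, d] \<and> Pd (f x) = [x]" using profile(2,6) by simp
  moreover have "length ss = kappa d" using profile(3) S(2) by simp
  moreover have "\<forall>x\<in>set ss. 2 \<le> iota x \<and> 1 \<le> kappa (f x)"
    using assms(7) profile(2) S(1) \<open>f ` S \<subseteq> D - {d}\<close> by auto
  ultimately have "blocking_pair Ph Pd (final_matching D H iota kappa Ph Pd) d h"
    by (rule wasted_interviews_blocking_pair[OF assms(3,4) profile(4,5)])
  then show ?thesis by (rule not_globally_adequate_if_blocking_pair[OF profile(1) assms(3,4)])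
qed

lemma not_globally_adequate_hospital_side:
  assumes "finite D" and "finite H" and "d \<in> D" and "h \<in> H" and "iota h < card H"
    and "iota h \<le> card {y \<in> D - {d}. 2 \<le> kappa y}" and "\<forall>x\<in>H. 1 \<le> iota x"
  shows "\<not> globally_adequate D H iota kappa"
proof -
  obtain T where T: "T \<subseteq> {y \<in> D - {d}. 2 \<le> kappa y}" "card T = iota h" "finite T"
    using obtain_subset_with_card_n[OF assms(6)] by blast
  have "iota h \<le> card (H - {h})" using assms(2,4,5) by (simp add: card_Diff_singleton)
  then obtain S where "S \<subseteq> H - {h}" "card S = iota h" "finite S"
    by (rule obtain_subset_with_card_n)
  then obtain g where "bij_betw g T S" using finite_same_card_bij T(2,3) by metis
  then have "inj_on g T" "g ` T \<subseteq> H - {h}" using \<open>S \<subseteq> H - {h}\<close> by (auto simp: bij_betw_def)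
  moreover have "T \<subseteq> D - {d}" using T(1) by blast
  ultimately obtain Pd Ph ts where profile: "valid_profile H D Pd Ph" "set ts = T"
    "length ts = card T" "Pd d = [h]" "Ph h = ts @ [d]" "\<forall>y\<in>T. Pd y = [g y, h] \<and> Ph (g y) = [y]"
    using wasted_interviews_profile[OF assms(4,3) _ T(3)] by blast
  have valid: "valid_profile D H Ph Pd" using profile(1) valid_profile_swap by blast
  interpret two_stage D H Ph Pd iota kappa "interview_matching H iota kappa Ph Pd"
      "final_matching D H iota kappa Ph Pd"
    using two_stage_final_matching assms(1,2) valid .
  interpret swapped: two_stage H D Pd Ph kappa iota "(interview_matching H iota kappa Ph Pd)\<inverse>"
      "(final_matching D H iota kappa Ph Pd)\<inverse>"
    by (rule two_stage_swap) unfold_locales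
  have "\<forall>y\<in>set ts. Pd y = [g y, h] \<and> Ph (g y) = [y]" using profile(2,6) by simp
  moreover have "length ts = iota h" using profile(3) T(2) by simp
  moreover have "\<forall>y\<in>set ts. 2 \<le> kappa y \<and> 1 \<le> iota (g y)"
    using assms(7) profile(2) T(1) \<open>g ` T \<subseteq> H - {h}\<close> by auto
  ultimately have "blocking_pair Pd Ph ((final_matching D H iota kappa Ph Pd)\<inverse>) h d"
    by (rule swapped.wasted_interviews_blocking_pair[OF assms(4,3) profile(4,5)])
  then show ?thesis
    by (intro not_globally_adequate_if_blocking_pair[OF valid assms(3,4)])
      (simp add: blocking_pair_converse)
qed

section \<open>Global adequacy\<close>

lemma globally_adequate_if_unit_or_large:
  assumes "finite D" and "finite H"
    and "(\<forall>d\<in>D. kappa d = 1) \<and> (\<forall>h\<in>H. iota h = 1) \<or>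
      (\<forall>d\<in>D. min (card D) (card H) \<le> kappa d) \<and> (\<forall>h\<in>H. min (card D) (card H) \<le> iota h)"
  shows "globally_adequate D H iota kappa"
  unfolding globally_adequate_def adequate_def
proof (intro allI impI)
  fix Ph Pd
  assume "valid_profile D H Ph Pd"
  then interpret two_stage D H Ph Pd iota kappa "interview_matching H iota kappa Ph Pd"
      "final_matching D H iota kappa Ph Pd"
    using two_stage_final_matching assms(1,2) by blast
  show "stable D H Ph Pd (final_matching D H iota kappa Ph Pd)"
    using stable_if_unit_or_large assms(3) .
qed

lemma not_globally_adequate_if_doctor_short:
  assumes "finite D" and "finite H" and "d \<in> D" and "kappa d < min (card D) (card H)"
    and "\<forall>h\<in>H. 2 \<le> iota h" and "\<forall>y\<in>D. 1 \<le> kappa y"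
  shows "\<not> globally_adequate D H iota kappa"
proof -
  obtain h where "h \<in> H" using assms(4) by fastforce
  have "{x \<in> H - {h}. 2 \<le> iota x} = H - {h}" using assms(5) by blast
  then have "kappa d \<le> card {x \<in> H - {h}. 2 \<le> iota x}"
    using assms(2,4) \<open>h \<in> H\<close> by (simp add: card_Diff_singleton, arith)
  then show ?thesis
    using not_globally_adequate_doctor_side[OF assms(1-3) \<open>h \<in> H\<close>] assms(4,6) by simp
qed

lemma not_globally_adequate_if_hospital_short:
  assumes "finite D" and "finite H" and "h \<in> H" and "iota h < min (card D) (card H)"
    and "\<forall>d\<in>D. 2 \<le> kappa d" and "\<forall>x\<in>H. 1 \<le> iota x"
  shows "\<not> globally_adequate D H iota kappa"
proof -
  obtain d where "d \<in> D" using assms(4) by fastforce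
  have "{y \<in> D - {d}. 2 \<le> kappa y} = D - {d}" using assms(5) by blast
  then have "iota h \<le> card {y \<in> D - {d}. 2 \<le> kappa y}"
    using assms(1,4) \<open>d \<in> D\<close> by (simp add: card_Diff_singleton, arith)
  then show ?thesis
    using not_globally_adequate_hospital_side[OF assms(1,2) \<open>d \<in> D\<close> assms(3)] assms(4,6) by simp
qed

lemma not_globally_adequate_if_mixed_units:
  assumes "finite D" and "finite H" and "2 \<le> card D" and "2 \<le> card H"
    and "\<forall>h\<in>H. 1 \<le> iota h" and "\<forall>d\<in>D. 1 \<le> kappa d"
    and "h1 \<in> H" and "iota h1 = 1" and "d1 \<in> D" and "kappa d1 = 1"
    and "\<not> ((\<forall>d\<in>D. kappa d = 1) \<and> (\<forall>h\<in>H. iota h = 1))"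
  shows "\<not> globally_adequate D H iota kappa"
proof -
  have "(\<exists>h\<in>H. iota h \<noteq> 1) \<or> (\<exists>d\<in>D. kappa d \<noteq> 1)" using assms(11) by blast
  then show ?thesis
  proof (elim disjE bexE)
    fix h2 assume "h2 \<in> H" "iota h2 \<noteq> 1"
    then have "h2 \<in> {x \<in> H - {h1}. 2 \<le> iota x}" using assms(5,8) by force
    moreover have "finite {x \<in> H - {h1}. 2 \<le> iota x}" using assms(2) by simp
    ultimately have "kappa d1 \<le> card {x \<in> H - {h1}. 2 \<le> iota x}"
      using assms(10) card_mono[of _ "{h2}"] by fastforce
    then show ?thesis
      using not_globally_adequate_doctor_side[OF assms(1,2,9,7)] assms(3,6,10) by simp
  next
    fix d2 assume "d2 \<in> D" "kappa d2 \<noteq> 1"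
    then have "d2 \<in> {y \<in> D - {d1}. 2 \<le> kappa y}" using assms(6,10) by force
    moreover have "finite {y \<in> D - {d1}. 2 \<le> kappa y}" using assms(1) by simp
    ultimately have "iota h1 \<le> card {y \<in> D - {d1}. 2 \<le> kappa y}"
      using assms(8) card_mono[of _ "{d2}"] by fastforce
    then show ?thesis
      using not_globally_adequate_hospital_side[OF assms(1,2,9,7)] assms(4,5,8) by simp
  qed
qed

lemma not_globally_adequate_if_not_unit_or_large:
  assumes "finite D" and "finite H" and "2 \<le> card D" and "2 \<le> card H"
    and "\<forall>h\<in>H. 1 \<le> iota h" and "\<forall>d\<in>D. 1 \<le> kappa d"
    and "\<not> ((\<forall>d\<in>D. kappa d = 1) \<and> (\<forall>h\<in>H. iota h = 1) \<or>
      (\<forall>d\<in>D. min (card D) (card H) \<le> kappa d) \<and> (\<forall>h\<in>H. min (card D) (card H) \<le> iota h))"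
  shows "\<not> globally_adequate D H iota kappa"
proof (cases "\<exists>d\<in>D. kappa d < min (card D) (card H)")
  case False
  then have large: "\<forall>d\<in>D. min (card D) (card H) \<le> kappa d" using not_less by blast
  then obtain h where "h \<in> H" "\<not> min (card D) (card H) \<le> iota h" using assms(7) by blast
  moreover have "\<forall>d\<in>D. 2 \<le> kappa d" using large assms(3,4) by force
  ultimately show ?thesis
    using not_globally_adequate_if_hospital_short[OF assms(1,2)] assms(5) by (simp add: not_le)
next
  case True
  then obtain d where d: "d \<in> D" "kappa d < min (card D) (card H)" by blast
  show ?thesis
  proof (cases "\<forall>h\<in>H. 2 \<le> iota h")
    case True
    then show ?thesis
      using not_globally_adequate_if_doctor_short[where kappa = kappa, OF assms(1,2) d] assms(6)
      by blast
  next
    case False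
    then obtain h1 where h1: "h1 \<in> H" "iota h1 = 1" using assms(5) by (auto simp: not_le)
    show ?thesis
    proof (cases "\<forall>d\<in>D. 2 \<le> kappa d")
      case True
      then show ?thesis
        using not_globally_adequate_if_hospital_short[where iota = iota, OF assms(1,2) h1(1)]
          h1(2) assms(3-5)
        by simp
    next
      case False
      then obtain d1 where "d1 \<in> D" "kappa d1 = 1" using assms(6) by (auto simp: not_le)
      then show ?thesis
        using not_globally_adequate_if_mixed_units[OF assms(1-6) h1] assms(7) by blast
    qed
  qed
qed

theorem proposition1:
  fixes D :: "'d set" and H :: "'h set" and iota :: "'h \<Rightarrow> nat" and kappa :: "'d \<Rightarrow> nat"
  assumes "finite D" and "finite H" and "card D \<ge> 2" and "card H \<ge> 2"
    and "\<forall>h\<in>H. iota h \<ge> 1" and "\<forall>d\<in>D. kappa d \<ge> 1"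
  shows "globally_adequate D H iota kappa \<longleftrightarrow>
           (((\<forall>d\<in>D. kappa d = 1) \<and> (\<forall>h\<in>H. iota h = 1)) \<or>
            ((\<forall>d\<in>D. kappa d \<ge> min (card D) (card H)) \<and> (\<forall>h\<in>H. iota h \<ge> min (card D) (card H))))"
  using globally_adequate_if_unit_or_large[OF assms(1,2)]
    not_globally_adequate_if_not_unit_or_large[OF assms]
  by blast

end
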